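(* Assume the standing assumptions below and let $f$ satisfy the conditions (F). Let $g$ be defined by $$g(t,x)=A c_0(x)\Big[\varphi(c_0(x))\,e^{\lambda A\int_0^t f(\tau,x)d\tau}-Bc_0(x)\Big]^{-1},\qquad (t,x)\in[0,T]\times\Omega_{h,0}^+.$$ Then there are constants $k_1,\kappa,\hat C_1,\hat C_2>0$, depending only on $A,B,C_0,c_m,\lambda,T,\eta$ (and not on $h$, nor on $f$ beyond (F)), such that $$\sup_{t\in[0,T]}\|C_0-g(t,\cdot)\|^2_{L^2(\Omega_h^+)}\le k_1\Big(\|C_0-c_0\|^2_{L^2(\Omega_h^+)}+\kappa\sup_{t\in[0,T]}\|f(t,\cdot)\|^2_{L^2(\Omega_h^+)}\Big),$$ $$\|g\|_{L^\infty([0,T]\times\Omega_h^+)}\le\hat C_1,\qquad \sup_{t\in[0,T]}\|D^+_hg(t,\cdot)\|^2_{L^2(\Omega_h^+)}\le\hat C_2\,T\Big(\|D^+_hc_0\|^2_{L^2(\Omega_h^+)}+\kappa\int_0^T\|D^+_hf(t,\cdot)\|^2_{L^2(\Omega_h^+)}dt\Big).$$ Moreover the last estimate also holds for $\varphi(g)$ in place of $g$, up to the factor $|B|$.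
   Context: Discrete setting: $h>0$, $\Omega_h^+=\{h,2h,\dots\}$, $\Omega_{h,0}^+=\Omega_h^+\cup\{0\}$, $\|f\|_{L^p(\Omega_h^+)}=(h\sum_{z\in\Omega_h^+}|f(z)|^p)^{1/p}$, $D^+_hf(x)=\frac{f(x+h)-f(x)}{h}$, $D^-_hf(x)=\frac{f(x)-f(x-h)}{h}$. Standing assumptions: $A=1$, $B\in\{-1,1\}$, $\varphi(c)=A+Bc$, $\lambda>0$, $T>0$, $\eta>0$; $\psi\in C^\beta([0,T])$ for some $\beta\in(1/4,1/2)$ with $0\le\psi\le\eta$, $\psi(0)=0$; $s_0:\Omega_{h,0}^+\to\mathbb{R}$ with $0\le s_0\le\eta$, $s_0(0)=0$, $s_0,D^+_hs_0\in L^2(\Omega_h^+)$; $c_0:\Omega_{h,0}^+\to\mathbb{R}$ with $0<c_m\le c_0\le C_0$ and $C_0-c_0,\ D^+_hc_0\in L^2(\Omega_h^+)$; there are constants $0<\varphi_{\min}\le\varphi_{\max}$ with $\varphi_{\min}\le\varphi(c)\le\varphi_{\max}$ for all $c\in[0,C_0]$; if $B=1$ then $\eta<1$. Conditions (F) on a Borel $f:[0,T]\times\Omega_{h,0}^+\to\mathbb{R}$, for some $K>0$: $f\in C([0,T],L^2(\Omega_h^+))$, $D^+_hf\in L^2([0,T],L^2(\Omega_h^+))$, $\sup_t\|f(t)\|^2_{L^2(\Omega_h^+)}+\int_0^T\|D^+_hf(t)\|^2_{L^2(\Omega_h^+)}dt\le K$, $f\ge0$, $f(t,0)=\psi(t)$,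 and $0\le f\le\eta$. *)

theory Defs
  imports "HOL-Analysis.Analysis"
begin

text \<open>Grid functions on \<Omega>_{h,0}^+ = {0,h,2h,...} are represented as functions
  nat \<Rightarrow> real, index k standing for the grid point k*h. Index 0 is the
  boundary point 0; \<Omega>_h^+ corresponds to indices k \<ge> 1.\<close>

definition Acoef :: real where "Acoef = 1"

definition phi :: "real \<Rightarrow> real \<Rightarrow> real" where
  "phi B c = Acoef + B * c"

definition l2sq :: "real \<Rightarrow> (nat \<Rightarrow> real) \<Rightarrow> real" where
  "l2sq h u = h * (\<Sum>n. (u (Suc n))\<^sup>2)"

definition inL2 :: "(nat \<Rightarrow> real) \<Rightarrow> bool" where
  "inL2 u \<longleftrightarrow> summable (\<lambda>n. (u (Suc n))\<^sup>2)"

definition Dp :: "real \<Rightarrow> (nat \<Rightarrow> real) \<Rightarrow> nat \<Rightarrow> real" where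
  "Dp h u k = (u (Suc k) - u k) / h"

definition holder_on :: "real \<Rightarrow> real set \<Rightarrow> (real \<Rightarrow> real) \<Rightarrow> bool" where
  "holder_on \<beta> S \<psi> \<longleftrightarrow> (\<exists>L. \<forall>s\<in>S. \<forall>t\<in>S. \<bar>\<psi> s - \<psi> t\<bar> \<le> L * \<bar>s - t\<bar> powr \<beta>)"

definition condF :: "real \<Rightarrow> real \<Rightarrow> real \<Rightarrow> (real \<Rightarrow> real) \<Rightarrow> real \<Rightarrow> (real \<Rightarrow> nat \<Rightarrow> real) \<Rightarrow> bool" where
  "condF h T \<eta> \<psi> K f \<longleftrightarrow>
     K > 0 \<and>
     \<comment> \<open>Borel measurability (the space factor is discrete)\<close>
     (\<forall>k. (\<lambda>t. f t k) \<in> borel_measurable (restrict_space borel {0..T})) \<and>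
     \<comment> \<open>f \<in> C([0,T], L2)\<close>
     (\<forall>t\<in>{0..T}. inL2 (f t)) \<and>
     (\<forall>t\<in>{0..T}. \<forall>\<epsilon>>0. \<exists>\<delta>>0. \<forall>s\<in>{0..T}. \<bar>s - t\<bar> < \<delta> \<longrightarrow>
         l2sq h (\<lambda>k. f s k - f t k) < \<epsilon>) \<and>
     \<comment> \<open>D_h^+ f \<in> L2([0,T], L2)\<close>
     (\<forall>t\<in>{0..T}. inL2 (Dp h (f t))) \<and>
     set_integrable lborel {0..T} (\<lambda>t. l2sq h (Dp h (f t))) \<and>
     \<comment> \<open>energy bound: sup_t ||f(t)||^2 + int_0^T ||D^+ f||^2 \<le> K\<close>
     (\<forall>t\<in>{0..T}. l2sq h (f t) + (LINT t:{0..T}|lborel. l2sq h (Dp h (f t))) \<le> K) \<and>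
     \<comment> \<open>sign, boundary condition, bounds\<close>
     (\<forall>t\<in>{0..T}. f t 0 = \<psi> t) \<and>
     (\<forall>t\<in>{0..T}. \<forall>k. 0 \<le> f t k \<and> f t k \<le> \<eta>)"

definition gfun :: "real \<Rightarrow> real \<Rightarrow> (nat \<Rightarrow> real) \<Rightarrow> (real \<Rightarrow> nat \<Rightarrow> real) \<Rightarrow> real \<Rightarrow> nat \<Rightarrow> real" where
  "gfun B lam c0 f t k =
     Acoef * c0 k / (phi B (c0 k) * exp (lam * Acoef * integral {0..t} (\<lambda>\<tau>. f \<tau> k)) - B * c0 k)"

end

theory Submission
  imports Defs
begin

(* g(t,x) = G(c0 x, y) with y = int_0^t f(tau,x) dtau and the explicit function
   G(c,y) = c / (1 + (1 + B c) (exp (lam y) - 1))   (gmap below).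
   For 0 <= c <= C0 and 0 <= y <= eta T, G lies between 0 and c, G(c,0) = c, and G is Lipschitz in
   (c,y) with a constant L depending only on C0, lam and eta T. Hence, pointwise on the grid,
   |C0 - g| <= |C0 - c0| + L y   and   |D_h^+ g| <= L |D_h^+ c0| + L |D_h^+ y|,
   where D_h^+ y = int_0^t D_h^+ f. Squaring, summing over the grid and using the Cauchy-Schwarz
   inequality in time, ||int_0^t w||^2 <= t int_0^t ||w||^2, gives both L2 estimates, and
   D_h^+ phi(g) = B D_h^+ g gives the last one. *)

lemma abs_exp_diff_le:
  fixes a b M :: real
  assumes "a \<le> M" "b \<le> M"
  shows "\<bar>exp a - exp b\<bar> \<le> exp M * \<bar>a - b\<bar>"
proof -
  have one_sided: "exp y - exp x \<le> exp M * (y - x)" if "x \<le> y" "y \<le> M" for x y :: real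
  proof -
    have "exp y * (1 + (x - y)) \<le> exp y * exp (x - y)"
      by (simp add: exp_ge_add_one_self)
    then have "exp y - exp x \<le> exp y * (y - x)"
      by (simp add: exp_diff algebra_simps)
    also have "\<dots> \<le> exp M * (y - x)"
      using that by (intro mult_right_mono) auto
    finally show ?thesis .
  qed
  show ?thesis
    using one_sided[of a b] one_sided[of b a] assms by (cases "a \<le> b") (auto simp: abs_if)
qed

lemma integral_square_le:
  fixes u :: "real \<Rightarrow> real"
  assumes u: "u integrable_on {a..b}" and u2: "(\<lambda>x. (u x)\<^sup>2) integrable_on {a..b}"
    and ab: "a \<le> b"
  shows "(integral {a..b} u)\<^sup>2 \<le> (b - a) * integral {a..b} (\<lambda>x. (u x)\<^sup>2)"
proof (cases "a = b")
  case False
  define d where "d = b - a"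
  define I where "I = integral {a..b} u"
  define m where "m = I / d"
  have d: "0 < d" using ab False by (simp add: d_def)
  have lin: "(\<lambda>x. 2 * m * u x) integrable_on {a..b}"
    using integrable_cmul[OF u, of "2 * m"] by simp
  have "I\<^sup>2 / d = 2 * m * I - m\<^sup>2 * d"
    using d by (simp add: m_def power2_eq_square field_simps)
  also have "\<dots> = integral {a..b} (\<lambda>x. 2 * m * u x - m\<^sup>2)"
    using ab by (simp add: integral_diff[OF lin integrable_const_ivl] I_def d_def)
  also have "\<dots> \<le> integral {a..b} (\<lambda>x. (u x)\<^sup>2)"
  proof (rule integral_le[OF integrable_diff[OF lin integrable_const_ivl] u2])
    show "2 * m * u x - m\<^sup>2 \<le> (u x)\<^sup>2" for x
      using zero_le_power2[of "u x - m"] by (simp add: power2_eq_square algebra_simps)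
  qed
  finally show ?thesis
    using d by (simp add: I_def d_def field_simps)
qed simp

lemma bounded_measurable_integrable_on:
  fixes u :: "real \<Rightarrow> real"
  assumes u: "u \<in> borel_measurable (restrict_space borel {a..b})"
    and bound: "\<And>x. x \<in> {a..b} \<Longrightarrow> \<bar>u x\<bar> \<le> c"
  shows "u integrable_on {a..b}"
proof -
  have "set_integrable lborel {a..b} u"
    unfolding set_integrable_def
  proof (rule integrableI_bounded_set[where A="{a..b}" and B=c])
    show "(\<lambda>x. indicat_real {a..b} x *\<^sub>R u x) \<in> borel_measurable lborel"
      using u by (subst (asm) borel_measurable_restrict_space_iff) auto
  qed (use bound in \<open>auto split: split_indicator simp: emeasure_lborel_Icc_eq\<close>)
  then show ?thesis
    by (rule set_borel_integral_eq_integral)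
qed

lemma bounded_measurable_integrable_on_subinterval:
  fixes u :: "real \<Rightarrow> real"
  assumes u: "u \<in> borel_measurable (restrict_space borel {a..b})"
    and bound: "\<And>x. x \<in> {a..b} \<Longrightarrow> \<bar>u x\<bar> \<le> c"
    and sub: "{s..t} \<subseteq> {a..b}"
  shows "u integrable_on {s..t}" "(\<lambda>x. (u x)\<^sup>2) integrable_on {s..t}"
proof -
  show "u integrable_on {s..t}"
    using bounded_measurable_integrable_on[OF u bound] sub by (rule integrable_on_subinterval)
  have "\<bar>(u x)\<^sup>2\<bar> \<le> c\<^sup>2" if "x \<in> {a..b}" for x
    using power_mono[OF bound[OF that], of 2] by simp
  then have "(\<lambda>x. (u x)\<^sup>2) integrable_on {a..b}"
    using u by (intro bounded_measurable_integrable_on) measurable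
  then show "(\<lambda>x. (u x)\<^sup>2) integrable_on {s..t}"
    using sub by (rule integrable_on_subinterval)
qed

lemma l2sq_nonneg: "0 \<le> h \<Longrightarrow> inL2 u \<Longrightarrow> 0 \<le> l2sq h u"
  unfolding l2sq_def inL2_def by (intro mult_nonneg_nonneg suminf_nonneg) auto

lemma partial_sum_le_l2sq:
  "0 \<le> h \<Longrightarrow> inL2 u \<Longrightarrow> h * (\<Sum>n<N. (u (Suc n))\<^sup>2) \<le> l2sq h u"
  unfolding l2sq_def inL2_def by (intro mult_left_mono sum_le_suminf) auto

lemma l2sq_le_of_partial_sums:
  assumes h: "0 < h" and partial: "\<And>N. h * (\<Sum>n<N. (u (Suc n))\<^sup>2) \<le> X"
  shows "inL2 u" "l2sq h u \<le> X"
proof -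
  have bound: "(\<Sum>n<N. (u (Suc n))\<^sup>2) \<le> X / h" for N
    using partial[of N] h by (simp add: field_simps)
  show L2: "inL2 u"
    unfolding inL2_def by (rule summableI_nonneg_bounded[OF _ bound]) simp
  have "(\<Sum>n. (u (Suc n))\<^sup>2) \<le> X / h"
    using L2 unfolding inL2_def by (rule suminf_le_const[OF _ bound])
  then show "l2sq h u \<le> X"
    unfolding l2sq_def using h by (simp add: field_simps)
qed

lemma l2sq_le_of_abs_le:
  assumes h: "0 < h" and v: "inL2 v" and w: "inL2 w"
    and bound: "\<And>k. \<bar>u k\<bar> \<le> a * \<bar>v k\<bar> + b * \<bar>w k\<bar>"
  shows "inL2 u" "l2sq h u \<le> 2 * a\<^sup>2 * l2sq h v + 2 * b\<^sup>2 * l2sq h w"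
proof -
  have pointwise: "(u k)\<^sup>2 \<le> 2 * a\<^sup>2 * (v k)\<^sup>2 + 2 * b\<^sup>2 * (w k)\<^sup>2" for k
  proof -
    have "(u k)\<^sup>2 \<le> (a * \<bar>v k\<bar> + b * \<bar>w k\<bar>)\<^sup>2"
      using power_mono[OF bound[of k], of 2] by simp
    also have "\<dots> \<le> 2 * a\<^sup>2 * (v k)\<^sup>2 + 2 * b\<^sup>2 * (w k)\<^sup>2"
      using zero_le_power2[of "a * \<bar>v k\<bar> - b * \<bar>w k\<bar>"]
      by (simp add: power2_eq_square algebra_simps)
    finally show ?thesis .
  qed
  have "h * (\<Sum>n<N. (u (Suc n))\<^sup>2)
      \<le> 2 * a\<^sup>2 * (h * (\<Sum>n<N. (v (Suc n))\<^sup>2)) + 2 * b\<^sup>2 * (h * (\<Sum>n<N. (w (Suc n))\<^sup>2))" for N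
  proof -
    have "(\<Sum>n<N. (u (Suc n))\<^sup>2) \<le> (\<Sum>n<N. 2 * a\<^sup>2 * (v (Suc n))\<^sup>2 + 2 * b\<^sup>2 * (w (Suc n))\<^sup>2)"
      by (intro sum_mono pointwise)
    from mult_left_mono[OF this, of h] h show ?thesis
      by (simp add: sum.distrib sum_distrib_left algebra_simps)
  qed
  also have "\<dots> N \<le> 2 * a\<^sup>2 * l2sq h v + 2 * b\<^sup>2 * l2sq h w" for N
    using h v w by (intro add_mono mult_left_mono partial_sum_le_l2sq) auto
  finally show "inL2 u" "l2sq h u \<le> 2 * a\<^sup>2 * l2sq h v + 2 * b\<^sup>2 * l2sq h w"
    using l2sq_le_of_partial_sums[OF h] by blast+
qed

lemma l2sq_scale:
  assumes "inL2 u"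
  shows "inL2 (\<lambda>k. c * u k)" "l2sq h (\<lambda>k. c * u k) = c\<^sup>2 * l2sq h u"
  using assms summable_mult[of _ "c\<^sup>2"] suminf_mult[of _ "c\<^sup>2"]
  unfolding inL2_def l2sq_def by (simp_all add: power_mult_distrib)

lemma Dp_integral:
  assumes "\<And>k. (\<lambda>\<tau>. f \<tau> k) integrable_on S"
  shows "Dp h (\<lambda>k. integral S (\<lambda>\<tau>. f \<tau> k)) k = integral S (\<lambda>\<tau>. Dp h (f \<tau>) k)"
proof -
  have "Dp h (\<lambda>k. integral S (\<lambda>\<tau>. f \<tau> k)) k
      = (1 / h) * (integral S (\<lambda>\<tau>. f \<tau> (Suc k)) - integral S (\<lambda>\<tau>. f \<tau> k))"
    by (simp add: Dp_def)
  also have "\<dots> = integral S (\<lambda>\<tau>. (1 / h) *\<^sub>R (f \<tau> (Suc k) - f \<tau> k))"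
    by (subst integral_cmul, subst integral_diff[OF assms assms]) simp
  also have "\<dots> = integral S (\<lambda>\<tau>. Dp h (f \<tau>) k)"
    by (simp add: Dp_def divide_inverse mult.commute)
  finally show ?thesis .
qed

lemma l2sq_integral_le:
  fixes W :: "real \<Rightarrow> nat \<Rightarrow> real"
  assumes h: "0 < h" and ab: "a \<le> b"
    and W: "\<And>k. (\<lambda>\<tau>. W \<tau> k) integrable_on {a..b}"
    and W2: "\<And>k. (\<lambda>\<tau>. (W \<tau> k)\<^sup>2) integrable_on {a..b}"
    and W_L2: "\<And>\<tau>. \<tau> \<in> {a..b} \<Longrightarrow> inL2 (W \<tau>)"
    and F: "F integrable_on {a..b}" and W_F: "\<And>\<tau>. \<tau> \<in> {a..b} \<Longrightarrow> l2sq h (W \<tau>) \<le> F \<tau>"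
  shows "inL2 (\<lambda>k. integral {a..b} (\<lambda>\<tau>. W \<tau> k))"
    "l2sq h (\<lambda>k. integral {a..b} (\<lambda>\<tau>. W \<tau> k)) \<le> (b - a) * integral {a..b} F"
proof -
  define P where "P N \<tau> = h * (\<Sum>n<N. (W \<tau> (Suc n))\<^sup>2)" for N \<tau>
  have sum_W2: "(\<lambda>\<tau>. \<Sum>n<N. (W \<tau> (Suc n))\<^sup>2) integrable_on {a..b}" for N
    using W2 by (intro integrable_sum) auto
  have P: "P N integrable_on {a..b}" for N
    using integrable_cmul[OF sum_W2, of h] unfolding P_def by simp
  have P_integral: "integral {a..b} (P N) = h * (\<Sum>n<N. integral {a..b} (\<lambda>\<tau>. (W \<tau> (Suc n))\<^sup>2))" for N
    unfolding P_def integral_mult[OF sum_W2, symmetric] using W2 by (simp add: integral_sum)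
  have P_le_F: "P N \<tau> \<le> F \<tau>" if "\<tau> \<in> {a..b}" for N \<tau>
    unfolding P_def using partial_sum_le_l2sq[OF less_imp_le[OF h] W_L2[OF that], of N] W_F[OF that]
    by linarith
  have "h * (\<Sum>n<N. (integral {a..b} (\<lambda>\<tau>. W \<tau> (Suc n)))\<^sup>2)
      \<le> h * (\<Sum>n<N. (b - a) * integral {a..b} (\<lambda>\<tau>. (W \<tau> (Suc n))\<^sup>2))" for N
    using h ab by (intro mult_left_mono sum_mono integral_square_le W W2) auto
  also have "\<dots> N = (b - a) * integral {a..b} (P N)" for N
    unfolding P_integral by (simp add: sum_distrib_left algebra_simps)
  also have "\<dots> N \<le> (b - a) * integral {a..b} F" for N
    using ab P_le_F by (intro mult_left_mono integral_le[OF P F]) auto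
  finally show "inL2 (\<lambda>k. integral {a..b} (\<lambda>\<tau>. W \<tau> k))"
    "l2sq h (\<lambda>k. integral {a..b} (\<lambda>\<tau>. W \<tau> k)) \<le> (b - a) * integral {a..b} F"
    using l2sq_le_of_partial_sums[OF h, of "\<lambda>k. integral {a..b} (\<lambda>\<tau>. W \<tau> k)"] by blast+
qed

lemma abs_divide_le_self:
  fixes x d :: real
  assumes "1 \<le> d"
  shows "\<bar>x / d\<bar> \<le> \<bar>x\<bar>"
  using assms mult_left_mono[OF assms, of "\<bar>x\<bar>"] by (simp add: abs_divide divide_le_eq)

definition gmap :: "real \<Rightarrow> real \<Rightarrow> real \<Rightarrow> real \<Rightarrow> real" where
  "gmap B lam c y = c / (1 + (1 + B * c) * (exp (lam * y) - 1))"

lemma gfun_eq_gmap: "gfun B lam c0 f t k = gmap B lam (c0 k) (integral {0..t} (\<lambda>\<tau>. f \<tau> k))"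
  unfolding gfun_def gmap_def phi_def Acoef_def by (simp add: algebra_simps)

lemma gmap_zero [simp]: "gmap B lam c 0 = c"
  by (simp add: gmap_def)

lemma gmap_denominator_ge_one:
  fixes B c lam y :: real
  assumes "0 \<le> 1 + B * c" "0 \<le> lam * y"
  shows "1 \<le> 1 + (1 + B * c) * (exp (lam * y) - 1)"
proof -
  have "0 \<le> exp (lam * y) - 1"
    using one_le_exp_iff[THEN iffD2, OF assms(2)] by simp
  with assms(1) show ?thesis
    by simp
qed

lemma gmap_bounds:
  assumes "0 \<le> c" "0 \<le> 1 + B * c" "0 \<le> lam * y"
  shows "0 \<le> gmap B lam c y" "gmap B lam c y \<le> c"
  using gmap_denominator_ge_one[OF assms(2,3)] assms(1)
  by (simp_all add: gmap_def divide_le_eq mult_le_cancel_left1)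

lemma gmap_lipschitz_c:
  assumes "0 \<le> 1 + B * c" "0 \<le> 1 + B * c'" "0 \<le> lam" "0 \<le> y" "y \<le> Y"
  shows "\<bar>gmap B lam c y - gmap B lam c' y\<bar> \<le> exp (lam * Y) * \<bar>c - c'\<bar>"
proof -
  define E where "E = exp (lam * y)"
  define D where "D = 1 + (1 + B * c) * (E - 1)"
  define D' where "D' = 1 + (1 + B * c') * (E - 1)"
  have D: "1 \<le> D" "1 \<le> D'"
    using gmap_denominator_ge_one assms by (simp_all add: D_def D'_def E_def)
  have "c * D' - c' * D = (c - c') * E"
    by (simp add: D_def D'_def algebra_simps)
  then have "\<bar>gmap B lam c y - gmap B lam c' y\<bar> = \<bar>(c - c') * E / (D * D')\<bar>"
    using D by (simp add: gmap_def D_def D'_def E_def diff_frac_eq)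
  also have "\<dots> \<le> \<bar>c - c'\<bar> * E"
    using D mult_mono[OF D] by (intro order_trans[OF abs_divide_le_self]) (simp_all add: abs_mult E_def)
  also have "\<dots> \<le> exp (lam * Y) * \<bar>c - c'\<bar>"
  proof -
    have "E \<le> exp (lam * Y)"
      using assms by (simp add: E_def mult_left_mono)
    from mult_left_mono[OF this abs_ge_zero] show ?thesis
      by (simp add: mult.commute)
  qed
  finally show ?thesis .
qed

lemma gmap_lipschitz_y:
  assumes "0 \<le> c" "0 \<le> 1 + B * c" "0 \<le> lam" "0 \<le> y" "y \<le> Y" "0 \<le> y'" "y' \<le> Y"
  shows "\<bar>gmap B lam c y - gmap B lam c y'\<bar> \<le> c * (1 + B * c) * lam * exp (lam * Y) * \<bar>y - y'\<bar>"
proof -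
  define p where "p = 1 + B * c"
  define E where "E = exp (lam * y)"
  define E' where "E' = exp (lam * y')"
  define D where "D = 1 + p * (E - 1)"
  define D' where "D' = 1 + p * (E' - 1)"
  have D: "1 \<le> D" "1 \<le> D'"
    using gmap_denominator_ge_one assms by (simp_all add: D_def D'_def E_def E'_def p_def)
  have "c * D' - c * D = c * p * (E' - E)"
    by (simp add: D_def D'_def algebra_simps)
  then have "\<bar>gmap B lam c y - gmap B lam c y'\<bar> = \<bar>c * p * (E' - E) / (D * D')\<bar>"
    using D by (simp add: gmap_def D_def D'_def E_def E'_def p_def diff_frac_eq)
  also have "\<dots> \<le> c * p * \<bar>E' - E\<bar>"
    using D mult_mono[OF D] assms by (intro order_trans[OF abs_divide_le_self]) (simp_all add: abs_mult p_def)
  also have "\<dots> \<le> c * p * (exp (lam * Y) * (lam * \<bar>y - y'\<bar>))"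
  proof (rule mult_left_mono)
    have "\<bar>E' - E\<bar> \<le> exp (lam * Y) * \<bar>lam * y' - lam * y\<bar>"
      unfolding E_def E'_def using assms by (intro abs_exp_diff_le mult_left_mono)
    also have "\<bar>lam * y' - lam * y\<bar> = lam * \<bar>y - y'\<bar>"
      using assms by (simp add: abs_mult flip: right_diff_distrib abs_minus_commute)
    finally show "\<bar>E' - E\<bar> \<le> exp (lam * Y) * (lam * \<bar>y - y'\<bar>)" .
  qed (use assms in \<open>simp add: p_def\<close>)
  finally show ?thesis
    by (simp add: p_def mult_ac)
qed

definition gmap_lip :: "real \<Rightarrow> real \<Rightarrow> real \<Rightarrow> real" where
  "gmap_lip C lam Y = exp (lam * Y) * (1 + lam * C * (1 + C))"

lemma gmap_lipschitz:
  assumes B: "\<bar>B\<bar> \<le> 1" and lam: "0 \<le> lam"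
    and c: "0 \<le> c" "c \<le> C" "0 \<le> 1 + B * c" and c': "0 \<le> c'" "c' \<le> C" "0 \<le> 1 + B * c'"
    and y: "0 \<le> y" "y \<le> Y" and y': "0 \<le> y'" "y' \<le> Y"
  shows "\<bar>gmap B lam c y - gmap B lam c' y'\<bar> \<le> gmap_lip C lam Y * (\<bar>c - c'\<bar> + \<bar>y - y'\<bar>)"
proof -
  have "B * c' \<le> c'"
    using mult_right_mono[of B 1 c'] B c' by (simp add: abs_le_iff)
  then have growth: "c' * (1 + B * c') * lam \<le> C * (1 + C) * lam"
    using c' lam by (intro mult_mono mult_right_mono) auto
  have "\<bar>gmap B lam c y - gmap B lam c' y'\<bar>
      \<le> \<bar>gmap B lam c y - gmap B lam c' y\<bar> + \<bar>gmap B lam c' y - gmap B lam c' y'\<bar>"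
    by arith
  also have "\<dots> \<le> exp (lam * Y) * \<bar>c - c'\<bar> + c' * (1 + B * c') * lam * exp (lam * Y) * \<bar>y - y'\<bar>"
    using c c' y y' lam by (intro add_mono gmap_lipschitz_c gmap_lipschitz_y)
  also have "\<dots> \<le> exp (lam * Y) * \<bar>c - c'\<bar> + C * (1 + C) * lam * exp (lam * Y) * \<bar>y - y'\<bar>"
    by (intro add_left_mono mult_right_mono[OF mult_right_mono[OF growth]]) auto
  also have "\<dots> \<le> gmap_lip C lam Y * (\<bar>c - c'\<bar> + \<bar>y - y'\<bar>)"
    using c lam by (simp add: gmap_lip_def algebra_simps)
  finally show ?thesis .
qed

lemma integral_Icc_bounds:
  fixes u :: "real \<Rightarrow> real"
  assumes u: "u integrable_on {a..b}" and ab: "a \<le> b"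
    and bound: "\<And>x. x \<in> {a..b} \<Longrightarrow> 0 \<le> u x \<and> u x \<le> M"
  shows "0 \<le> integral {a..b} u" "integral {a..b} u \<le> (b - a) * M"
proof -
  show "0 \<le> integral {a..b} u"
    using bound by (intro integral_nonneg[OF u]) auto
  have "integral {a..b} u \<le> integral {a..b} (\<lambda>x. M)"
    using bound by (intro integral_le[OF u integrable_const_ivl]) auto
  then show "integral {a..b} u \<le> (b - a) * M"
    using ab by simp
qed

context
  fixes B lam C \<eta> T t :: real and c0 :: "nat \<Rightarrow> real" and f :: "real \<Rightarrow> nat \<Rightarrow> real"
  assumes B: "\<bar>B\<bar> \<le> 1" and lam: "0 \<le> lam" and t: "0 \<le> t" "t \<le> T"
    and c0: "\<And>k. 0 \<le> c0 k" "\<And>k. c0 k \<le> C" "\<And>k. 0 \<le> 1 + B * c0 k"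
    and f: "\<And>\<tau> k. \<tau> \<in> {0..t} \<Longrightarrow> 0 \<le> f \<tau> k \<and> f \<tau> k \<le> \<eta>"
    and f_int: "\<And>k. (\<lambda>\<tau>. f \<tau> k) integrable_on {0..t}"
begin

lemma time_integral_bounds:
  shows "0 \<le> integral {0..t} (\<lambda>\<tau>. f \<tau> k)" "integral {0..t} (\<lambda>\<tau>. f \<tau> k) \<le> \<eta> * T"
proof -
  have "0 \<le> \<eta>"
    using f[of 0 k] t by auto
  then have "t * \<eta> \<le> \<eta> * T"
    using mult_right_mono[OF t(2)] by (metis mult.commute)
  then show "0 \<le> integral {0..t} (\<lambda>\<tau>. f \<tau> k)" "integral {0..t} (\<lambda>\<tau>. f \<tau> k) \<le> \<eta> * T"
    using integral_Icc_bounds[OF f_int t(1) f] by (auto intro: order_trans)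
qed

lemma gfun_bounds: "0 \<le> gfun B lam c0 f t k" "gfun B lam c0 f t k \<le> c0 k"
  unfolding gfun_eq_gmap using c0 lam time_integral_bounds by (simp_all add: gmap_bounds)

lemma abs_gfun_diff_le:
  "\<bar>gfun B lam c0 f t j - gfun B lam c0 f t k\<bar>
    \<le> gmap_lip C lam (\<eta> * T) * (\<bar>c0 j - c0 k\<bar> + \<bar>integral {0..t} (\<lambda>\<tau>. f \<tau> j) - integral {0..t} (\<lambda>\<tau>. f \<tau> k)\<bar>)"
  unfolding gfun_eq_gmap using B lam c0 time_integral_bounds by (intro gmap_lipschitz) auto

lemma abs_gfun_minus_initial_le:
  "\<bar>gfun B lam c0 f t k - c0 k\<bar> \<le> gmap_lip C lam (\<eta> * T) * \<bar>integral {0..t} (\<lambda>\<tau>. f \<tau> k)\<bar>"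
  using gmap_lipschitz[OF B lam c0(1-3)[of k] c0(1-3)[of k], of "integral {0..t} (\<lambda>\<tau>. f \<tau> k)" "\<eta> * T" 0]
    time_integral_bounds[of k]
  by (simp add: gfun_eq_gmap)

lemma l2sq_const_minus_gfun_le:
  assumes h: "0 < h" and c0_L2: "inL2 (\<lambda>k. C - c0 k)"
    and f2_int: "\<And>k. (\<lambda>\<tau>. (f \<tau> k)\<^sup>2) integrable_on {0..t}"
    and f_L2: "\<And>\<tau>. \<tau> \<in> {0..t} \<Longrightarrow> inL2 (f \<tau>)"
    and f_S: "\<And>\<tau>. \<tau> \<in> {0..t} \<Longrightarrow> l2sq h (f \<tau>) \<le> S"
  shows "inL2 (\<lambda>k. C - gfun B lam c0 f t k)"
    "l2sq h (\<lambda>k. C - gfun B lam c0 f t k)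
      \<le> 2 * l2sq h (\<lambda>k. C - c0 k) + 2 * (gmap_lip C lam (\<eta> * T))\<^sup>2 * (t * (t * S))"
proof -
  define I where "I = (\<lambda>k. integral {0..t} (\<lambda>\<tau>. f \<tau> k))"
  have I: "inL2 I" "l2sq h I \<le> t * (t * S)"
    using l2sq_integral_le[OF h t(1) f_int f2_int f_L2 integrable_const_ivl f_S] t
    by (simp_all add: I_def)
  have "\<bar>C - gfun B lam c0 f t k\<bar> \<le> 1 * \<bar>C - c0 k\<bar> + gmap_lip C lam (\<eta> * T) * \<bar>I k\<bar>" for k
  proof -
    have "\<bar>C - gfun B lam c0 f t k\<bar> \<le> \<bar>C - c0 k\<bar> + \<bar>gfun B lam c0 f t k - c0 k\<bar>"
      by arith
    with abs_gfun_minus_initial_le[of k] show ?thesis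
      unfolding I_def by simp
  qed
  note bound = l2sq_le_of_abs_le[OF h c0_L2 I(1) this]
  show "inL2 (\<lambda>k. C - gfun B lam c0 f t k)"
    by (rule bound(1))
  show "l2sq h (\<lambda>k. C - gfun B lam c0 f t k)
      \<le> 2 * l2sq h (\<lambda>k. C - c0 k) + 2 * (gmap_lip C lam (\<eta> * T))\<^sup>2 * (t * (t * S))"
    using bound(2) mult_left_mono[OF I(2), of "2 * (gmap_lip C lam (\<eta> * T))\<^sup>2"] by simp
qed

lemma l2sq_Dp_gfun_le:
  assumes h: "0 < h" and c0_L2: "inL2 (Dp h c0)"
    and Df_int: "\<And>k. (\<lambda>\<tau>. Dp h (f \<tau>) k) integrable_on {0..t}"
    and Df2_int: "\<And>k. (\<lambda>\<tau>. (Dp h (f \<tau>) k)\<^sup>2) integrable_on {0..t}"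
    and Df_L2: "\<And>\<tau>. \<tau> \<in> {0..t} \<Longrightarrow> inL2 (Dp h (f \<tau>))"
    and F_int: "(\<lambda>\<tau>. l2sq h (Dp h (f \<tau>))) integrable_on {0..t}"
  shows "inL2 (Dp h (gfun B lam c0 f t))"
    "l2sq h (Dp h (gfun B lam c0 f t))
      \<le> 2 * (gmap_lip C lam (\<eta> * T))\<^sup>2 * l2sq h (Dp h c0)
        + 2 * (gmap_lip C lam (\<eta> * T))\<^sup>2 * (t * integral {0..t} (\<lambda>\<tau>. l2sq h (Dp h (f \<tau>))))"
proof -
  define L where "L = gmap_lip C lam (\<eta> * T)"
  define I where "I = (\<lambda>k. integral {0..t} (\<lambda>\<tau>. f \<tau> k))"
  have "Dp h I = (\<lambda>k. integral {0..t} (\<lambda>\<tau>. Dp h (f \<tau>) k))"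
    unfolding I_def using Dp_integral[where f = f, OF f_int] by auto
  then have DI: "inL2 (Dp h I)" "l2sq h (Dp h I) \<le> t * integral {0..t} (\<lambda>\<tau>. l2sq h (Dp h (f \<tau>)))"
    using l2sq_integral_le[OF h t(1) Df_int Df2_int Df_L2 F_int] by simp_all
  have "\<bar>Dp h (gfun B lam c0 f t) k\<bar> \<le> L * \<bar>Dp h c0 k\<bar> + L * \<bar>Dp h I k\<bar>" for k
  proof -
    have "\<bar>Dp h (gfun B lam c0 f t) k\<bar> = \<bar>gfun B lam c0 f t (Suc k) - gfun B lam c0 f t k\<bar> / h"
      using h by (simp add: Dp_def abs_divide)
    also have "\<dots> \<le> L * (\<bar>c0 (Suc k) - c0 k\<bar> + \<bar>I (Suc k) - I k\<bar>) / h"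
      using abs_gfun_diff_le h by (simp add: L_def I_def divide_right_mono)
    also have "\<dots> = L * \<bar>Dp h c0 k\<bar> + L * \<bar>Dp h I k\<bar>"
      using h by (simp add: Dp_def abs_divide add_divide_distrib algebra_simps)
    finally show ?thesis .
  qed
  note bound = l2sq_le_of_abs_le[OF h c0_L2 DI(1) this]
  show "inL2 (Dp h (gfun B lam c0 f t))"
    by (rule bound(1))
  show "l2sq h (Dp h (gfun B lam c0 f t))
      \<le> 2 * (gmap_lip C lam (\<eta> * T))\<^sup>2 * l2sq h (Dp h c0)
        + 2 * (gmap_lip C lam (\<eta> * T))\<^sup>2 * (t * integral {0..t} (\<lambda>\<tau>. l2sq h (Dp h (f \<tau>))))"
    using bound(2) mult_left_mono[OF DI(2), of "2 * L\<^sup>2"] unfolding L_def by simp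
qed

end

lemma Dp_phi: "Dp h (\<lambda>k. phi B (u k)) = (\<lambda>k. B * Dp h u k)"
  by (simp add: Dp_def phi_def fun_eq_iff algebra_simps diff_divide_distrib)

lemma l2sq_Dp_phi_le:
  assumes B: "\<bar>B\<bar> \<le> 1" and h: "0 \<le> h" and u: "inL2 (Dp h u)"
  shows "inL2 (Dp h (\<lambda>k. phi B (u k)))" "l2sq h (Dp h (\<lambda>k. phi B (u k))) \<le> \<bar>B\<bar> * l2sq h (Dp h u)"
proof -
  have "B\<^sup>2 \<le> \<bar>B\<bar>"
    using mult_left_mono[OF B abs_ge_zero[of B]] by (simp add: power2_eq_square)
  from mult_right_mono[OF this l2sq_nonneg[OF h u]]
  show "inL2 (Dp h (\<lambda>k. phi B (u k)))" "l2sq h (Dp h (\<lambda>k. phi B (u k))) \<le> \<bar>B\<bar> * l2sq h (Dp h u)"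
    using l2sq_scale(1)[OF u, of B] l2sq_scale(2)[OF u, of h B] by (simp_all add: Dp_phi)
qed

lemma condF_time_integrable:
  assumes F: "condF h T \<eta> \<psi> K f" and h: "0 < h" and t: "t \<in> {0..T}"
  shows "(\<lambda>\<tau>. f \<tau> k) integrable_on {0..t}" "(\<lambda>\<tau>. (f \<tau> k)\<^sup>2) integrable_on {0..t}"
    "(\<lambda>\<tau>. Dp h (f \<tau>) k) integrable_on {0..t}" "(\<lambda>\<tau>. (Dp h (f \<tau>) k)\<^sup>2) integrable_on {0..t}"
proof -
  have meas: "(\<lambda>\<tau>. f \<tau> j) \<in> borel_measurable (restrict_space borel {0..T})" for j
    using F unfolding condF_def by blast
  have bound: "0 \<le> f \<tau> j \<and> f \<tau> j \<le> \<eta>" if "\<tau> \<in> {0..T}" for \<tau> j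
    using F that unfolding condF_def by blast
  have sub: "{0..t} \<subseteq> {0..T}"
    using t by auto
  have "\<bar>f \<tau> k\<bar> \<le> \<eta>" if "\<tau> \<in> {0..T}" for \<tau>
    using bound[OF that] by auto
  then show "(\<lambda>\<tau>. f \<tau> k) integrable_on {0..t}" "(\<lambda>\<tau>. (f \<tau> k)\<^sup>2) integrable_on {0..t}"
    using bounded_measurable_integrable_on_subinterval[OF meas _ sub] by blast+
  have "\<bar>Dp h (f \<tau>) k\<bar> \<le> \<eta> / h" if "\<tau> \<in> {0..T}" for \<tau>
    using bound[OF that, of k] bound[OF that, of "Suc k"] h
    by (simp add: Dp_def abs_divide divide_right_mono abs_le_iff)
  moreover have "(\<lambda>\<tau>. Dp h (f \<tau>) k) \<in> borel_measurable (restrict_space borel {0..T})"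
    unfolding Dp_def using meas[of k] meas[of "Suc k"] by measurable
  ultimately show "(\<lambda>\<tau>. Dp h (f \<tau>) k) integrable_on {0..t}"
    "(\<lambda>\<tau>. (Dp h (f \<tau>) k)\<^sup>2) integrable_on {0..t}"
    using bounded_measurable_integrable_on_subinterval[OF _ _ sub] by blast+
qed

lemma condF_energy:
  assumes F: "condF h T \<eta> \<psi> K f" and h: "0 < h"
  shows "(\<lambda>\<tau>. l2sq h (Dp h (f \<tau>))) integrable_on {0..T}"
    "(LINT \<tau>:{0..T}|lborel. l2sq h (Dp h (f \<tau>))) = integral {0..T} (\<lambda>\<tau>. l2sq h (Dp h (f \<tau>)))"
    "0 \<le> integral {0..T} (\<lambda>\<tau>. l2sq h (Dp h (f \<tau>)))"
    "\<tau> \<in> {0..T} \<Longrightarrow> l2sq h (f \<tau>) \<le> (SUP t\<in>{0..T}. l2sq h (f t))"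
proof -
  have int: "set_integrable lborel {0..T} (\<lambda>\<tau>. l2sq h (Dp h (f \<tau>)))"
    using F unfolding condF_def by blast
  show F_int: "(\<lambda>\<tau>. l2sq h (Dp h (f \<tau>))) integrable_on {0..T}"
    and LINT: "(LINT \<tau>:{0..T}|lborel. l2sq h (Dp h (f \<tau>))) = integral {0..T} (\<lambda>\<tau>. l2sq h (Dp h (f \<tau>)))"
    using set_borel_integral_eq_integral[OF int] by blast+
  have "inL2 (Dp h (f \<tau>))" if "\<tau> \<in> {0..T}" for \<tau>
    using F that unfolding condF_def by blast
  then show J: "0 \<le> integral {0..T} (\<lambda>\<tau>. l2sq h (Dp h (f \<tau>)))"
    using h by (intro integral_nonneg[OF F_int] l2sq_nonneg) auto
  have "l2sq h (f t) \<le> K" if "t \<in> {0..T}" for t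
  proof -
    have "l2sq h (f t) + integral {0..T} (\<lambda>\<tau>. l2sq h (Dp h (f \<tau>))) \<le> K"
      using F that unfolding condF_def LINT by blast
    with J show ?thesis
      by linarith
  qed
  then show "\<tau> \<in> {0..T} \<Longrightarrow> l2sq h (f \<tau>) \<le> (SUP t\<in>{0..T}. l2sq h (f t))"
    by (intro cSUP_upper bdd_aboveI2)
qed

lemma gfun_estimates_at:
  fixes C0 lam \<eta> T :: real
  defines "L \<equiv> gmap_lip C0 lam (\<eta> * T)"
  assumes B: "\<bar>B\<bar> \<le> 1" and lam: "0 \<le> lam" and h: "0 < h" and t: "t \<in> {0..T}"
    and c0: "\<And>k. 0 \<le> c0 k \<and> c0 k \<le> C0" "\<And>k. 0 \<le> phi B (c0 k)"
    and c0_L2: "inL2 (\<lambda>k. C0 - c0 k)" "inL2 (Dp h c0)"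
    and F: "condF h T \<eta> \<psi> K f"
  shows "inL2 (\<lambda>k. C0 - gfun B lam c0 f t k)"
    "l2sq h (\<lambda>k. C0 - gfun B lam c0 f t k)
      \<le> 2 * l2sq h (\<lambda>k. C0 - c0 k) + 2 * L\<^sup>2 * (T\<^sup>2 * (SUP t\<in>{0..T}. l2sq h (f t)))"
    "inL2 (Dp h (gfun B lam c0 f t))"
    "l2sq h (Dp h (gfun B lam c0 f t))
      \<le> 2 * L\<^sup>2 * (l2sq h (Dp h c0) + T * integral {0..T} (\<lambda>\<tau>. l2sq h (Dp h (f \<tau>))))"
proof -
  define S where "S = (SUP t\<in>{0..T}. l2sq h (f t))"
  define J where "J = integral {0..T} (\<lambda>\<tau>. l2sq h (Dp h (f \<tau>)))"
  note energy = condF_energy[OF F h]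
  note ints = condF_time_integrable[OF F h t]
  have t': "0 \<le> t" "t \<le> T" "{0..t} \<subseteq> {0..T}"
    using t by auto
  have f: "0 \<le> f \<tau> k \<and> f \<tau> k \<le> \<eta>" "inL2 (f \<tau>)" "inL2 (Dp h (f \<tau>))" if "\<tau> \<in> {0..T}" for \<tau> k
    using F that unfolding condF_def by blast+
  have c0': "0 \<le> c0 k" "c0 k \<le> C0" "0 \<le> 1 + B * c0 k" for k
    using c0[of k] by (simp_all add: phi_def Acoef_def)
  have S: "0 \<le> S"
    using energy(4)[OF t] l2sq_nonneg[OF less_imp_le[OF h] f(2)[OF t]] unfolding S_def by linarith
  have F_int: "(\<lambda>\<tau>. l2sq h (Dp h (f \<tau>))) integrable_on {0..t}"
    using integrable_on_subinterval[OF energy(1) t'(3)] .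
  have f_t: "0 \<le> f \<tau> k \<and> f \<tau> k \<le> \<eta>" "inL2 (f \<tau>)" "l2sq h (f \<tau>) \<le> S" "inL2 (Dp h (f \<tau>))"
    if "\<tau> \<in> {0..t}" for \<tau> k
    using f energy(4) that t'(3) unfolding S_def by blast+
  note sub = l2sq_const_minus_gfun_le[OF B lam t'(1,2) c0' f_t(1) ints(1) h c0_L2(1) ints(2) f_t(2,3),
      folded L_def]
  note Dp = l2sq_Dp_gfun_le[OF B lam t'(1,2) c0' f_t(1) ints(1) h c0_L2(2) ints(3,4) f_t(4) F_int,
      folded L_def]
  have "t * (t * S) \<le> T\<^sup>2 * S"
    using t' S by (simp add: power2_eq_square mult_mono mult_right_mono flip: mult.assoc)
  then show "inL2 (\<lambda>k. C0 - gfun B lam c0 f t k)"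
    "l2sq h (\<lambda>k. C0 - gfun B lam c0 f t k)
      \<le> 2 * l2sq h (\<lambda>k. C0 - c0 k) + 2 * L\<^sup>2 * (T\<^sup>2 * (SUP t\<in>{0..T}. l2sq h (f t)))"
    using sub mult_left_mono[of _ _ "2 * L\<^sup>2"] unfolding S_def by force+
  have F_nonneg: "0 \<le> l2sq h (Dp h (f \<tau>))" if "\<tau> \<in> {0..T}" for \<tau>
    using l2sq_nonneg[OF less_imp_le[OF h] f(3)[OF that]] .
  have "integral {0..t} (\<lambda>\<tau>. l2sq h (Dp h (f \<tau>))) \<le> J"
    unfolding J_def using F_nonneg by (intro integral_subset_le[OF t'(3) F_int energy(1)]) auto
  moreover have "0 \<le> integral {0..t} (\<lambda>\<tau>. l2sq h (Dp h (f \<tau>)))"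
    using F_nonneg t'(3) by (intro integral_nonneg[OF F_int]) auto
  ultimately have "t * integral {0..t} (\<lambda>\<tau>. l2sq h (Dp h (f \<tau>))) \<le> T * J"
    using t' by (intro mult_mono) auto
  then show "inL2 (Dp h (gfun B lam c0 f t))"
    "l2sq h (Dp h (gfun B lam c0 f t))
      \<le> 2 * L\<^sup>2 * (l2sq h (Dp h c0) + T * integral {0..T} (\<lambda>\<tau>. l2sq h (Dp h (f \<tau>))))"
    using Dp mult_left_mono[of _ _ "2 * L\<^sup>2"] unfolding J_def by (force simp: distrib_left)+
qed

lemma gfun_estimates:
  fixes C0 lam \<eta> T :: real
  defines "L \<equiv> gmap_lip C0 lam (\<eta> * T)"
  assumes B: "\<bar>B\<bar> \<le> 1" and lam: "0 \<le> lam" and T: "0 < T" and h: "0 < h"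
    and c0: "\<And>k. 0 \<le> c0 k \<and> c0 k \<le> C0" "\<And>k. 0 \<le> phi B (c0 k)"
    and c0_L2: "inL2 (\<lambda>k. C0 - c0 k)" "inL2 (Dp h c0)"
    and F: "condF h T \<eta> \<psi> K f"
  shows "let g = gfun B lam c0 f;
            supf = (SUP t\<in>{0..T}. l2sq h (f t));
            intDf = (LINT t:{0..T}|lborel. l2sq h (Dp h (f t)))
        in
         (\<forall>t\<in>{0..T}. inL2 (\<lambda>k. C0 - g t k) \<and>
            l2sq h (\<lambda>k. C0 - g t k) \<le> 2 * (l2sq h (\<lambda>k. C0 - c0 k) + (L\<^sup>2 * T\<^sup>2 + T) * supf)) \<and>
         (\<forall>t\<in>{0..T}. \<forall>k\<ge>1. \<bar>g t k\<bar> \<le> \<bar>C0\<bar> + 1) \<and>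
         (\<forall>t\<in>{0..T}. inL2 (Dp h (g t)) \<and>
            l2sq h (Dp h (g t))
              \<le> (2 * L\<^sup>2 + 1) / T * T * (l2sq h (Dp h c0) + (L\<^sup>2 * T\<^sup>2 + T) * intDf)) \<and>
         (\<forall>t\<in>{0..T}. inL2 (Dp h (\<lambda>k. phi B (g t k))) \<and>
            l2sq h (Dp h (\<lambda>k. phi B (g t k)))
              \<le> \<bar>B\<bar> * ((2 * L\<^sup>2 + 1) / T) * T * (l2sq h (Dp h c0) + (L\<^sup>2 * T\<^sup>2 + T) * intDf))"
proof -
  define S where "S = (SUP t\<in>{0..T}. l2sq h (f t))"
  define J where "J = integral {0..T} (\<lambda>\<tau>. l2sq h (Dp h (f \<tau>)))"
  define \<kappa> where "\<kappa> = L\<^sup>2 * T\<^sup>2 + T"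
  note energy = condF_energy[OF F h, folded J_def S_def]
  have f: "0 \<le> f \<tau> k \<and> f \<tau> k \<le> \<eta>" "inL2 (f \<tau>)" if "\<tau> \<in> {0..T}" for \<tau> k
    using F that unfolding condF_def by blast+
  have S: "0 \<le> S"
    using energy(4)[of 0] l2sq_nonneg[OF less_imp_le[OF h] f(2)[of 0]] T by simp
  have c0_0: "0 \<le> l2sq h (Dp h c0)"
    using h c0_L2 by (simp add: l2sq_nonneg)
  show ?thesis
    unfolding Let_def energy(2) S_def[symmetric] \<kappa>_def[symmetric]
  proof (intro conjI ballI allI impI)
    fix t assume t: "t \<in> {0..T}"
    note at = gfun_estimates_at[OF B lam h t c0 c0_L2 F, folded L_def S_def J_def]
    show "inL2 (\<lambda>k. C0 - gfun B lam c0 f t k)" "inL2 (Dp h (gfun B lam c0 f t))"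
      using at(1,3) .
    have "L\<^sup>2 * T\<^sup>2 * S \<le> \<kappa> * S"
      using S T by (simp add: \<kappa>_def mult_right_mono)
    then show "l2sq h (\<lambda>k. C0 - gfun B lam c0 f t k) \<le> 2 * (l2sq h (\<lambda>k. C0 - c0 k) + \<kappa> * S)"
      using at(2) by (simp add: algebra_simps)
    have "2 * L\<^sup>2 * (l2sq h (Dp h c0) + T * J) \<le> (2 * L\<^sup>2 + 1) * (l2sq h (Dp h c0) + \<kappa> * J)"
      using c0_0 energy(3) T
      by (intro mult_mono add_left_mono mult_right_mono) (auto simp: \<kappa>_def)
    then show Dp_bound: "l2sq h (Dp h (gfun B lam c0 f t)) \<le> (2 * L\<^sup>2 + 1) / T * T * (l2sq h (Dp h c0) + \<kappa> * J)"
      using at(4) T by simp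
    from l2sq_Dp_phi_le[OF B less_imp_le[OF h] at(3)] mult_left_mono[OF Dp_bound abs_ge_zero[of B]] T
    show "inL2 (Dp h (\<lambda>k. phi B (gfun B lam c0 f t k)))"
      "l2sq h (Dp h (\<lambda>k. phi B (gfun B lam c0 f t k)))
        \<le> \<bar>B\<bar> * ((2 * L\<^sup>2 + 1) / T) * T * (l2sq h (Dp h c0) + \<kappa> * J)"
      by (simp_all add: mult.assoc)
  next
    fix t and k :: nat assume t: "t \<in> {0..T}"
    have "0 \<le> gfun B lam c0 f t k" "gfun B lam c0 f t k \<le> c0 k"
      using t f c0 condF_time_integrable(1)[OF F h t]
      by (intro gfun_bounds[where C = C0 and T = T and \<eta> = \<eta>] B lam; auto simp: phi_def Acoef_def)+
    then show "\<bar>gfun B lam c0 f t k\<bar> \<le> \<bar>C0\<bar> + 1"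
      using c0(1)[of k] by simp
  qed
qed

theorem mainTheorem6:
  fixes B C0 cm lam T \<eta> :: real
  assumes hB: "B \<in> {-1, 1}"
    and hlam: "lam > 0" and hT: "T > 0" and heta: "\<eta> > 0" and hcm: "cm > 0"
    and hphi: "\<exists>\<phi>min \<phi>max. 0 < \<phi>min \<and> \<phi>min \<le> \<phi>max \<and>
                 (\<forall>c\<in>{0..C0}. \<phi>min \<le> phi B c \<and> phi B c \<le> \<phi>max)"
    and hB1: "B = 1 \<Longrightarrow> \<eta> < 1"
  shows "\<exists>k1 \<kappa> C1 C2. k1 > 0 \<and> \<kappa> > 0 \<and> C1 > 0 \<and> C2 > 0 \<and>
    (\<forall>h \<beta> \<psi> s0 c0 f K.
       h > 0 \<and>
       1/4 < \<beta> \<and> \<beta> < 1/2 \<and> holder_on \<beta> {0..T} \<psi> \<and>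
       (\<forall>t\<in>{0..T}. 0 \<le> \<psi> t \<and> \<psi> t \<le> \<eta>) \<and> \<psi> 0 = 0 \<and>
       (\<forall>k. 0 \<le> s0 k \<and> s0 k \<le> \<eta>) \<and> s0 0 = 0 \<and> inL2 s0 \<and> inL2 (Dp h s0) \<and>
       (\<forall>k. cm \<le> c0 k \<and> c0 k \<le> C0) \<and> inL2 (\<lambda>k. C0 - c0 k) \<and> inL2 (Dp h c0) \<and>
       condF h T \<eta> \<psi> K f
     \<longrightarrow>
       (let g = gfun B lam c0 f;
            supf = (SUP t\<in>{0..T}. l2sq h (f t));
            intDf = (LINT t:{0..T}|lborel. l2sq h (Dp h (f t)))
        in
         (\<forall>t\<in>{0..T}. inL2 (\<lambda>k. C0 - g t k) \<and>
            l2sq h (\<lambda>k. C0 - g t k) \<le> k1 * (l2sq h (\<lambda>k. C0 - c0 k) + \<kappa> * supf)) \<and>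
         (\<forall>t\<in>{0..T}. \<forall>k\<ge>1. \<bar>g t k\<bar> \<le> C1) \<and>
         (\<forall>t\<in>{0..T}. inL2 (Dp h (g t)) \<and>
            l2sq h (Dp h (g t)) \<le> C2 * T * (l2sq h (Dp h c0) + \<kappa> * intDf)) \<and>
         (\<forall>t\<in>{0..T}. inL2 (Dp h (\<lambda>k. phi B (g t k))) \<and>
            l2sq h (Dp h (\<lambda>k. phi B (g t k))) \<le> \<bar>B\<bar> * C2 * T * (l2sq h (Dp h c0) + \<kappa> * intDf))))"
proof -
  have B: "\<bar>B\<bar> \<le> 1"
    using hB by auto
  obtain \<phi>min where \<phi>min: "0 < \<phi>min" "\<forall>c\<in>{0..C0}. \<phi>min \<le> phi B c"
    using hphi by blast
  have phi_c0: "0 \<le> phi B c" if "cm \<le> c" "c \<le> C0" for c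
  proof -
    have "\<phi>min \<le> phi B c"
      using \<phi>min(2) hcm that by simp
    with \<phi>min(1) show ?thesis
      by linarith
  qed
  define L where "L = gmap_lip C0 lam (\<eta> * T)"
  have constants_pos: "0 < L\<^sup>2 * T\<^sup>2 + T" "0 < (2 * L\<^sup>2 + 1) / T"
    using hT by (simp_all add: add_nonneg_pos)
  show ?thesis
    by (rule exI[of _ 2], rule exI[of _ "L\<^sup>2 * T\<^sup>2 + T"], rule exI[of _ "\<bar>C0\<bar> + 1"],
        rule exI[of _ "(2 * L\<^sup>2 + 1) / T"], intro conjI allI impI;
        (elim conjE)?, (unfold L_def, rule gfun_estimates)?)
      (use constants_pos hT B hlam phi_c0 hcm in \<open>auto intro: order_trans[OF less_imp_le[OF hcm]]\<close>)
qed

end
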